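(* Let $(X,d)$ be a complete CAT(0) space and let $A,B\subseteq X$ be nonempty, closed and convex. Define $P:A\cup B\to A\cup B$ by $P(x)=P_B(x)$ if $x\in A$ and $P(x)=P_A(x)$ if $x\in B$. Then $P$ is a cyclic relatively nonexpansive mapping.
   Context: A CAT(0) space is a geodesic space in which every geodesic triangle satisfies $d(x,y)\le d_{\mathbb{E}^2}(\bar x,\bar y)$ for all points $x,y$ of the triangle and their comparison points $\bar x,\bar y$ in a Euclidean comparison triangle with the same side lengths. For nonempty closed convex $C$ in a complete CAT(0) space, $P_C(x)$ denotes the unique point of $C$ nearest to $x$ (metric projection). A mapping $T:A\cup B\to A\cup B$ is relatively nonexpansive if $d(Tx,Ty)\le d(x,y)$ for all $x\in A$, $y\in B$, and cyclic if $T(A)\subseteq B$ and $T(B)\subseteq A$. *)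

theory Defs
  imports "HOL-Analysis.Analysis"
begin

definition geodesic_from :: "('a::metric_space) \<Rightarrow> 'a \<Rightarrow> (real \<Rightarrow> 'a) \<Rightarrow> bool" where
  "geodesic_from x y g \<longleftrightarrow> g 0 = x \<and> g (dist x y) = y \<and>
     (\<forall>s\<in>{0..dist x y}. \<forall>t\<in>{0..dist x y}. dist (g s) (g t) = \<bar>s - t\<bar>)"

definition geodesic_space :: "'a::metric_space itself \<Rightarrow> bool" where
  "geodesic_space _ \<longleftrightarrow> (\<forall>x y::'a. \<exists>g. geodesic_from x y g)"

text \<open>Point at distance s from a on the Euclidean segment [a,b] of length l (the Euclidean
  plane is modelled by the complex numbers).\<close>
definition cmp_pt :: "complex \<Rightarrow> complex \<Rightarrow> real \<Rightarrow> real \<Rightarrow> complex" where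
  "cmp_pt a b l s = a + complex_of_real (s / l) * (b - a)"

text \<open>Pairs (point of a side, its comparison point) for the geodesic triangle with vertices
  x, y, z, sides g1 (x to y), g2 (y to z), g3 (z to x), and comparison triangle a, b, c.\<close>
definition tri_pairs ::
  "'a::metric_space \<Rightarrow> 'a \<Rightarrow> 'a \<Rightarrow> (real \<Rightarrow> 'a) \<Rightarrow> (real \<Rightarrow> 'a) \<Rightarrow> (real \<Rightarrow> 'a)
   \<Rightarrow> complex \<Rightarrow> complex \<Rightarrow> complex \<Rightarrow> ('a \<times> complex) set" where
  "tri_pairs x y z g1 g2 g3 a b c =
     {(g1 s, cmp_pt a b (dist x y) s) | s. s \<in> {0..dist x y}} \<union>
     {(g2 s, cmp_pt b c (dist y z) s) | s. s \<in> {0..dist y z}} \<union>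
     {(g3 s, cmp_pt c a (dist z x) s) | s. s \<in> {0..dist z x}}"

definition CAT0 :: "'a::metric_space itself \<Rightarrow> bool" where
  "CAT0 T \<longleftrightarrow> geodesic_space T \<and>
     (\<forall>(x::'a) y z g1 g2 g3 a b c.
        geodesic_from x y g1 \<and> geodesic_from y z g2 \<and> geodesic_from z x g3 \<and>
        dist a b = dist x y \<and> dist b c = dist y z \<and> dist c a = dist z x \<longrightarrow>
        (\<forall>(p, p')\<in>tri_pairs x y z g1 g2 g3 a b c. \<forall>(q, q')\<in>tri_pairs x y z g1 g2 g3 a b c.
            dist p q \<le> dist p' q'))"

definition geod_convex :: "'a::metric_space set \<Rightarrow> bool" where
  "geod_convex C \<longleftrightarrow> (\<forall>x\<in>C. \<forall>y\<in>C. \<forall>g. geodesic_from x y g \<longrightarrow> g ` {0..dist x y} \<subseteq> C)"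

definition metric_proj :: "'a::metric_space set \<Rightarrow> 'a \<Rightarrow> 'a" where
  "metric_proj C x = (THE p. p \<in> C \<and> (\<forall>q\<in>C. dist x p \<le> dist x q))"

definition cyclic_map :: "'a set \<Rightarrow> 'a set \<Rightarrow> ('a \<Rightarrow> 'a) \<Rightarrow> bool" where
  "cyclic_map A B T \<longleftrightarrow> T ` A \<subseteq> B \<and> T ` B \<subseteq> A"

definition rel_nonexpansive :: "'a::metric_space set \<Rightarrow> 'a set \<Rightarrow> ('a \<Rightarrow> 'a) \<Rightarrow> bool" where
  "rel_nonexpansive A B T \<longleftrightarrow> (\<forall>x\<in>A. \<forall>y\<in>B. dist (T x) (T y) \<le> dist x y)"

end

theory Submission
  imports Defs
begin

text \<open>The comparison axiom yields the CN inequality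
  d(x, g t)^2 \<le> (1 - t) d(x, y)^2 + t d(x, z)^2 - t (1 - t) d(y, z)^2 for the point g t
  at fraction t along a geodesic from y to z. It makes minimizing sequences in a convex set
  Cauchy, so metric projections onto closed convex sets exist and are unique; letting t \<rightarrow> 0 it
  shows that the projection p of x onto C satisfies d(x, p)^2 + d(p, c)^2 \<le> d(x, c)^2 for c \<in> C.
  For x \<in> A and y \<in> B both P x and P y thus see the segment from x to y under an obtuse angle;
  by CN at t = 1/2 they lie within d(x, y) / 2 of its midpoint, hence within d(x, y) of each other.\<close>

lemma complex_triangle_exists:
  fixes \<alpha> \<beta> \<gamma> :: real
  assumes "0 \<le> \<alpha>" "0 \<le> \<beta>" "0 \<le> \<gamma>" "\<alpha> \<le> \<beta> + \<gamma>" "\<beta> \<le> \<alpha> + \<gamma>" "\<gamma> \<le> \<alpha> + \<beta>"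
  shows "\<exists>a b c :: complex. dist a b = \<alpha> \<and> dist b c = \<beta> \<and> dist c a = \<gamma>"
proof (cases "\<beta> = 0")
  case True
  then show ?thesis using assms
    by (rule_tac x="of_real \<alpha>" in exI, rule_tac x=0 in exI, rule_tac x=0 in exI)
       (simp add: dist_norm)
next
  case False
  then have "\<beta> > 0" using assms by simp
  text \<open>Vertices 0, \<beta> and u + iv, with u, v solving the two circle equations.\<close>
  define u where "u = (\<alpha>\<^sup>2 - \<gamma>\<^sup>2 + \<beta>\<^sup>2) / (2 * \<beta>)"
  have "(2*\<alpha>*\<beta>)\<^sup>2 - (\<alpha>\<^sup>2 - \<gamma>\<^sup>2 + \<beta>\<^sup>2)\<^sup>2
      = (\<gamma> - \<alpha> + \<beta>) * (\<gamma> + \<alpha> - \<beta>) * (\<alpha> + \<beta> - \<gamma>) * (\<alpha> + \<beta> + \<gamma>)"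
    by (simp add: power2_eq_square algebra_simps)
  also have "\<dots> \<ge> 0" using assms by (intro mult_nonneg_nonneg) auto
  finally have "(\<alpha>\<^sup>2 - \<gamma>\<^sup>2 + \<beta>\<^sup>2)\<^sup>2 \<le> (2*\<alpha>*\<beta>)\<^sup>2" by simp
  then have "u\<^sup>2 \<le> (2*\<alpha>*\<beta>)\<^sup>2 / (2*\<beta>)\<^sup>2"
    by (simp add: u_def power_divide divide_right_mono)
  also have "\<dots> = \<alpha>\<^sup>2" using \<open>\<beta> > 0\<close> by (simp add: power_mult_distrib)
  finally have "u\<^sup>2 \<le> \<alpha>\<^sup>2" .
  define v where "v = sqrt (\<alpha>\<^sup>2 - u\<^sup>2)"
  have v2: "v\<^sup>2 = \<alpha>\<^sup>2 - u\<^sup>2" using \<open>u\<^sup>2 \<le> \<alpha>\<^sup>2\<close> by (simp add: v_def)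
  have "2 * \<beta> * u = \<alpha>\<^sup>2 - \<gamma>\<^sup>2 + \<beta>\<^sup>2" using \<open>\<beta> > 0\<close> by (simp add: u_def)
  then have "(\<beta> - u)\<^sup>2 + v\<^sup>2 = \<gamma>\<^sup>2" using v2 by (simp add: power2_eq_square algebra_simps)
  moreover have "Complex \<beta> 0 - Complex u v = Complex (\<beta> - u) (- v)" by (simp add: complex_eq_iff)
  ultimately have "dist (Complex \<beta> 0) (Complex u v) = \<gamma>"
    using assms by (simp add: dist_norm complex_norm)
  moreover have "dist (Complex u v) 0 = \<alpha>" "dist 0 (Complex \<beta> 0) = \<beta>"
    using v2 assms by (simp_all add: dist_norm complex_norm)
  ultimately show ?thesis by blast
qed

lemma norm_diff_scaleR_power2:
  fixes u w :: "'b::real_inner"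
  shows "(norm (u - t *\<^sub>R w))\<^sup>2 = (1 - t) * (norm u)\<^sup>2 + t * (norm (u - w))\<^sup>2 - t * (1 - t) * (norm w)\<^sup>2"
  unfolding power2_norm_eq_inner by (simp add: inner_commute algebra_simps)

lemma CAT0_geodesic_exists:
  assumes "CAT0 TYPE('a::metric_space)"
  obtains g where "geodesic_from (x::'a) y g"
  using assms unfolding CAT0_def geodesic_space_def by blast

lemma geod_convex_geodesic_point:
  assumes "geod_convex C" "x \<in> C" "y \<in> C" "geodesic_from x y g" "0 \<le> s" "s \<le> dist x y"
  shows "g s \<in> C"
proof -
  have "g ` {0..dist x y} \<subseteq> C" using assms(1-4) unfolding geod_convex_def by blast
  then show ?thesis using assms(5,6) by auto
qed

text \<open>In the Euclidean comparison triangle the CN inequality is an identity.\<close>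
lemma CAT0_CN_inequality:
  fixes x y z :: "'a::metric_space"
  assumes cat: "CAT0 TYPE('a)" and g: "geodesic_from y z g" and t: "0 \<le> t" "t \<le> 1"
  shows "(dist x (g (t * dist y z)))\<^sup>2
    \<le> (1 - t) * (dist x y)\<^sup>2 + t * (dist x z)\<^sup>2 - t * (1 - t) * (dist y z)\<^sup>2"
proof (cases "y = z")
  case True
  moreover have "g 0 = y" using g by (simp add: geodesic_from_def)
  ultimately show ?thesis by (simp add: algebra_simps)
next
  case False
  define D where "D = dist y z"
  have "D > 0" using False by (simp add: D_def)
  obtain g1 g3 where g1: "geodesic_from x y g1" and g3: "geodesic_from z x g3"
    using CAT0_geodesic_exists[OF cat] by metis
  obtain a b c :: complex where abc: "dist a b = dist x y" "dist b c = dist y z" "dist c a = dist z x"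
    using complex_triangle_exists[of "dist x y" "dist y z" "dist z x"]
    by (metis dist_commute dist_triangle zero_le_dist)
  define T where "T = tri_pairs x y z g1 g g3 a b c"
  have comparison: "\<forall>(p, p')\<in>T. \<forall>(q, q')\<in>T. dist p q \<le> dist p' q'"
    using cat g1 g g3 abc unfolding CAT0_def T_def by blast
  have "g1 0 = x" using g1 by (simp add: geodesic_from_def)
  then have "(x, a) \<in> T" unfolding T_def tri_pairs_def
    by (intro UnI1 CollectI exI[of _ 0]) (simp add: cmp_pt_def)
  moreover have "(g (t * D), cmp_pt b c D (t * D)) \<in> T"
    unfolding T_def tri_pairs_def using t \<open>D > 0\<close> by (auto simp: D_def mult_le_cancel_right1)
  ultimately have "dist x (g (t * D)) \<le> dist a (cmp_pt b c D (t * D))"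
    using comparison by fastforce
  also have "\<dots> = norm ((a - b) - t *\<^sub>R (c - b))"
    using \<open>D > 0\<close> by (simp add: cmp_pt_def dist_norm scaleR_conv_of_real algebra_simps)
  finally have "(dist x (g (t * D)))\<^sup>2 \<le> (norm ((a - b) - t *\<^sub>R (c - b)))\<^sup>2"
    by (simp add: power_mono)
  also have "\<dots> = (1 - t) * (norm (a - b))\<^sup>2 + t * (norm ((a - b) - (c - b)))\<^sup>2 - t * (1 - t) * (norm (c - b))\<^sup>2"
    by (rule norm_diff_scaleR_power2)
  also have "\<dots> = (1 - t) * (dist x y)\<^sup>2 + t * (dist x z)\<^sup>2 - t * (1 - t) * (dist y z)\<^sup>2"
    using abc by (simp add: dist_norm[symmetric] dist_commute)
  finally show ?thesis by (simp add: D_def)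
qed

lemma CAT0_CN_midpoint:
  fixes x y z :: "'a::metric_space"
  assumes "CAT0 TYPE('a)" and "geodesic_from y z g"
  shows "(dist x (g (dist y z / 2)))\<^sup>2 \<le> (dist x y)\<^sup>2 / 2 + (dist x z)\<^sup>2 / 2 - (dist y z)\<^sup>2 / 4"
  using CAT0_CN_inequality[OF assms, of "1/2" x] by simp

lemma CAT0_minimizing_sequence_Cauchy:
  fixes f :: "nat \<Rightarrow> 'a::metric_space"
  assumes cat: "CAT0 TYPE('a)" and cv: "geod_convex C" and f: "\<And>n. f n \<in> C"
    and lim: "(\<lambda>n. dist x (f n)) \<longlonglongrightarrow> infdist x C"
  shows "Cauchy f"
proof -
  define \<delta> where "\<delta> = infdist x C"
  have parallelogram: "(dist (f m) (f n))\<^sup>2 \<le> 2 * (dist x (f m))\<^sup>2 + 2 * (dist x (f n))\<^sup>2 - 4 * \<delta>\<^sup>2"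
    for m n
  proof -
    obtain g where g: "geodesic_from (f m) (f n) g" using CAT0_geodesic_exists[OF cat] .
    have "g (dist (f m) (f n) / 2) \<in> C"
      using geod_convex_geodesic_point[OF cv f f g] by simp
    then have "\<delta> \<le> dist x (g (dist (f m) (f n) / 2))" unfolding \<delta>_def by (rule infdist_le)
    then have "\<delta>\<^sup>2 \<le> (dist x (g (dist (f m) (f n) / 2)))\<^sup>2"
      by (simp add: \<delta>_def power_mono infdist_nonneg)
    then show ?thesis using CAT0_CN_midpoint[OF cat g, of x] by linarith
  qed
  show ?thesis
    unfolding Cauchy_def
  proof (intro allI impI)
    fix e :: real assume "e > 0"
    have "(\<lambda>n. (dist x (f n))\<^sup>2) \<longlonglongrightarrow> \<delta>\<^sup>2" unfolding \<delta>_def by (intro tendsto_intros lim)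
    moreover have "\<delta>\<^sup>2 < \<delta>\<^sup>2 + e\<^sup>2 / 4" using \<open>e > 0\<close> by simp
    ultimately have "\<forall>\<^sub>F n in sequentially. (dist x (f n))\<^sup>2 < \<delta>\<^sup>2 + e\<^sup>2 / 4"
      by (rule order_tendstoD(2))
    then obtain M where M: "\<And>n. n \<ge> M \<Longrightarrow> (dist x (f n))\<^sup>2 < \<delta>\<^sup>2 + e\<^sup>2 / 4"
      unfolding eventually_sequentially by blast
    have "dist (f m) (f n) < e" if "m \<ge> M" "n \<ge> M" for m n
    proof (rule power2_less_imp_less)
      show "(dist (f m) (f n))\<^sup>2 < e\<^sup>2"
        using parallelogram[of m n] M[OF \<open>m \<ge> M\<close>] M[OF \<open>n \<ge> M\<close>] by linarith
    qed (use \<open>e > 0\<close> in simp)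
    then show "\<exists>M. \<forall>m\<ge>M. \<forall>n\<ge>M. dist (f m) (f n) < e" by blast
  qed
qed

lemma CAT0_nearest_point_exists:
  fixes C :: "'a::complete_space set"
  assumes cat: "CAT0 TYPE('a)" and "C \<noteq> {}" "closed C" "geod_convex C"
  shows "\<exists>p\<in>C. \<forall>q\<in>C. dist x p \<le> dist x q"
proof -
  have bdd: "bdd_below ((\<lambda>c. dist x c) ` C)" by (rule bdd_belowI[of _ 0]) auto
  have "\<exists>c\<in>C. dist x c < infdist x C + inverse (real (Suc n))" for n
    using cINF_less_iff[OF \<open>C \<noteq> {}\<close> bdd] infdist_notempty[OF \<open>C \<noteq> {}\<close>]
    by (metis less_add_same_cancel1 inverse_positive_iff_positive of_nat_0_less_iff zero_less_Suc)
  then obtain f where f: "\<And>n. f n \<in> C" "\<And>n. dist x (f n) < infdist x C + inverse (real (Suc n))"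
    by metis
  have lim: "(\<lambda>n. dist x (f n)) \<longlonglongrightarrow> infdist x C"
  proof (rule real_tendsto_sandwich)
    show "\<forall>\<^sub>F n in sequentially. infdist x C \<le> dist x (f n)"
      by (intro always_eventually allI infdist_le f(1))
    show "\<forall>\<^sub>F n in sequentially. dist x (f n) \<le> infdist x C + inverse (real (Suc n))"
      by (intro always_eventually allI less_imp_le f(2))
    show "(\<lambda>n. infdist x C + inverse (real (Suc n))) \<longlonglongrightarrow> infdist x C"
      using tendsto_add[OF tendsto_const LIMSEQ_inverse_real_of_nat] by simp
  qed simp
  obtain l where l: "f \<longlonglongrightarrow> l"
    using CAT0_minimizing_sequence_Cauchy[OF cat \<open>geod_convex C\<close> f(1) lim]
    by (metis Cauchy_convergent_iff convergent_def)
  have "l \<in> C" using closed_sequentially[OF \<open>closed C\<close>] f(1) l by blast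
  moreover have "dist x l = infdist x C"
    using LIMSEQ_unique[OF tendsto_dist[OF tendsto_const l] lim] .
  ultimately show ?thesis using infdist_le by metis
qed

lemma CAT0_nearest_point_unique:
  fixes C :: "'a::metric_space set"
  assumes cat: "CAT0 TYPE('a)" and cv: "geod_convex C"
    and p: "p \<in> C" "\<forall>c\<in>C. dist x p \<le> dist x c"
    and q: "q \<in> C" "\<forall>c\<in>C. dist x q \<le> dist x c"
  shows "p = q"
proof -
  obtain g where g: "geodesic_from p q g" using CAT0_geodesic_exists[OF cat] .
  have "g (dist p q / 2) \<in> C" using geod_convex_geodesic_point[OF cv p(1) q(1) g] by simp
  then have "(dist x p)\<^sup>2 \<le> (dist x (g (dist p q / 2)))\<^sup>2" using p(2) by (simp add: power_mono)
  moreover have "dist x p = dist x q" using p q by force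
  then have "(dist x p)\<^sup>2 = (dist x q)\<^sup>2" by simp
  ultimately have "(dist p q)\<^sup>2 \<le> 0" using CAT0_CN_midpoint[OF cat g, of x] by linarith
  then show ?thesis by simp
qed

lemma CAT0_metric_proj:
  fixes C :: "'a::complete_space set"
  assumes "CAT0 TYPE('a)" "C \<noteq> {}" "closed C" "geod_convex C"
  shows "metric_proj C x \<in> C" "\<forall>q\<in>C. dist x (metric_proj C x) \<le> dist x q"
proof -
  have "\<exists>!p. p \<in> C \<and> (\<forall>q\<in>C. dist x p \<le> dist x q)"
    using CAT0_nearest_point_exists[OF assms] CAT0_nearest_point_unique[OF assms(1,4)] by blast
  from theI'[OF this] show "metric_proj C x \<in> C" "\<forall>q\<in>C. dist x (metric_proj C x) \<le> dist x q"
    unfolding metric_proj_def by auto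
qed

lemma metric_proj_ident:
  assumes "x \<in> C"
  shows "metric_proj C x = x"
  unfolding metric_proj_def
proof (rule the_equality)
  fix p assume "p \<in> C \<and> (\<forall>q\<in>C. dist x p \<le> dist x q)"
  then show "p = x" using assms by force
qed (use assms in simp)

lemma CAT0_nearest_point_obtuse:
  fixes C :: "'a::metric_space set"
  assumes cat: "CAT0 TYPE('a)" and cv: "geod_convex C"
    and p: "p \<in> C" "\<forall>q\<in>C. dist x p \<le> dist x q" and c: "c \<in> C"
  shows "(dist x p)\<^sup>2 + (dist p c)\<^sup>2 \<le> (dist x c)\<^sup>2"
proof -
  obtain g where g: "geodesic_from p c g" using CAT0_geodesic_exists[OF cat] .
  define D where "D = dist p c"
  have step: "(dist x p)\<^sup>2 + D\<^sup>2 - (dist x c)\<^sup>2 \<le> t * D\<^sup>2" if t: "0 < t" "t \<le> 1" for t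
  proof -
    have "g (t * D) \<in> C"
      using geod_convex_geodesic_point[OF cv p(1) c g] t by (simp add: D_def mult_left_le_one_le)
    then have "(dist x p)\<^sup>2 \<le> (dist x (g (t * D)))\<^sup>2" using p(2) by (simp add: power_mono)
    also have "\<dots> \<le> (1 - t) * (dist x p)\<^sup>2 + t * (dist x c)\<^sup>2 - t * (1 - t) * D\<^sup>2"
      using CAT0_CN_inequality[OF cat g, of t x] t by (simp add: D_def)
    finally have "t * ((dist x p)\<^sup>2 + D\<^sup>2 - (dist x c)\<^sup>2) \<le> t * (t * D\<^sup>2)"
      by (simp add: algebra_simps)
    then show ?thesis using t by simp
  qed
  have "((\<lambda>t. t * D\<^sup>2) \<longlongrightarrow> 0 * D\<^sup>2) (at_right 0)" by (intro tendsto_intros)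
  moreover have "\<forall>\<^sub>F t in at_right 0. (dist x p)\<^sup>2 + D\<^sup>2 - (dist x c)\<^sup>2 \<le> t * D\<^sup>2"
    using step eventually_at_right_real[of 0 1] by (auto elim: eventually_mono)
  ultimately have "(dist x p)\<^sup>2 + D\<^sup>2 - (dist x c)\<^sup>2 \<le> 0 * D\<^sup>2"
    by (rule tendsto_lowerbound) simp
  then show ?thesis by (simp add: D_def)
qed

lemma CAT0_dist_le_obtuse:
  fixes x y p q :: "'a::metric_space"
  assumes cat: "CAT0 TYPE('a)"
    and p: "(dist x p)\<^sup>2 + (dist p y)\<^sup>2 \<le> (dist x y)\<^sup>2"
    and q: "(dist x q)\<^sup>2 + (dist q y)\<^sup>2 \<le> (dist x y)\<^sup>2"
  shows "dist p q \<le> dist x y"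
proof -
  obtain g where g: "geodesic_from x y g" using CAT0_geodesic_exists[OF cat] .
  define m where "m = g (dist x y / 2)"
  have near_midpoint: "dist z m \<le> dist x y / 2"
    if "(dist x z)\<^sup>2 + (dist z y)\<^sup>2 \<le> (dist x y)\<^sup>2" for z
  proof (rule power2_le_imp_le)
    show "(dist z m)\<^sup>2 \<le> (dist x y / 2)\<^sup>2"
      using CAT0_CN_midpoint[OF cat g, of z] that by (simp add: m_def dist_commute power_divide)
  qed simp
  have "dist p q \<le> dist m p + dist m q" by (rule dist_triangle3)
  then show ?thesis using near_midpoint[OF p] near_midpoint[OF q] by (simp add: dist_commute)
qed

theorem mainTheorem9:
  fixes A B :: "'a::complete_space set"
  assumes "CAT0 TYPE('a)"
    and "A \<noteq> {}" and "closed A" and "geod_convex A"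
    and "B \<noteq> {}" and "closed B" and "geod_convex B"
  defines "P \<equiv> (\<lambda>x. if x \<in> A then metric_proj B x else metric_proj A x)"
  shows "cyclic_map A B P \<and> rel_nonexpansive A B P"
proof -
  note projA = CAT0_metric_proj[OF assms(1-4)]
  note projB = CAT0_metric_proj[OF assms(1,5-7)]
  have PA: "P x = metric_proj B x" if "x \<in> A" for x using that by (simp add: P_def)
  have PB: "P y = metric_proj A y" if "y \<in> B" for y
    using that by (simp add: P_def metric_proj_ident)
  have "cyclic_map A B P" unfolding cyclic_map_def using PA PB projA(1) projB(1) by auto
  moreover have "dist (P x) (P y) \<le> dist x y" if "x \<in> A" "y \<in> B" for x y
  proof (rule CAT0_dist_le_obtuse[OF assms(1)])
    show "(dist x (P x))\<^sup>2 + (dist (P x) y)\<^sup>2 \<le> (dist x y)\<^sup>2"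
      using CAT0_nearest_point_obtuse[OF assms(1,7) projB[of x] \<open>y \<in> B\<close>] PA[OF \<open>x \<in> A\<close>] by simp
    show "(dist x (P y))\<^sup>2 + (dist (P y) y)\<^sup>2 \<le> (dist x y)\<^sup>2"
      using CAT0_nearest_point_obtuse[OF assms(1,4) projA[of y] \<open>x \<in> A\<close>] PB[OF \<open>y \<in> B\<close>]
      by (simp add: dist_commute[of y] dist_commute[of "metric_proj A y" x] add.commute)
  qed
  ultimately show ?thesis unfolding rel_nonexpansive_def by blast
qed

end
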